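(* Let $M,X$ be metric spaces with $\#M\ge3$ and $r:=d_{GH}(M,X)<s(M)/2$. Let $d$ be a real number with $r<d\le s(M)/2$. Then: (1) there exists a correspondence $R\in\mathcal{R}(M,X)$ with $\operatorname{dis}R<2d\le s(M)$; (2) for each such $R$, the family $D_R=\{X_i:=R(i)\}_{i\in M}$ is a partition of $X$ (the sets $X_i$ are nonempty, pairwise disjoint and cover $X$); (3) for all $i,j\in M$ (possibly equal) and all $x_i\in X_i$, $x_j\in X_j$, one has $||x_ix_j|-|ij||<2d\le s(M)$; (4) $\operatorname{diam}X_i<2d\le s(M)$ for all $i\in M$; (5) if $d\le s(M)/4$, then the partition $D_R$ is uniquely determined: if $R'\in\mathcal{R}(M,X)$ also satisfies $\operatorname{dis}R'<2d$, then $D_{R'}=D_R$; (6) if $d\le\min\{s(M)/4,e(M)/4\}$, then the correspondence $R\in\mathcal{R}(M,X)$ with $\operatorname{dis}R<2d$ is unique; consequently $R$ is optimal, $\operatorname{dis}R=2d_{GH}(M,X)$, $\operatorname{diam}X_i\le\operatorname{dis}R$ for all $i$, and $||x_ix_j|-|ij||\le\operatorname{dis}R$ for all $i\ne j$, $x_i\in X_i$, $x_j\in X_j$.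
   Context: For sets $X,Y$, a correspondence is a relation $R\subset X\times Y$ whose projections to $X$ and $Y$ are both surjective; $\mathcal{R}(X,Y)$ is the set of correspondences, and $R(x)=\{y:(x,y)\in R\}$. For metric spaces, the distortion is $\operatorname{dis}R=\sup\{||xx'|-|yy'||:(x,y),(x',y')\in R\}$, and the Gromov–Hausdorff distance satisfies $d_{GH}(X,Y)=\frac12\inf\{\operatorname{dis}R: R\in\mathcal{R}(X,Y)\}$; $R$ is optimal if $\operatorname{dis}R=2d_{GH}(X,Y)$. For a metric space $M$ with $\#M\ge3$: $s(M)=\inf\{|xx'|: x\ne x'\}$; $S(M)$ is the set of bijections $M\to M$ and $e(M)=\inf\{\operatorname{dis}f: f\in S(M), f\ne\mathrm{id}\}$, where $\operatorname{dis}f=\sup_{x,x'}||xx'|-|f(x)f(x')||$ (the distortion of the graph of $f$). *)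

theory Defs
  imports "HOL-Analysis.Analysis"
begin

definition correspondence :: "'a set \<Rightarrow> 'b set \<Rightarrow> ('a \<times> 'b) set \<Rightarrow> bool" where
  "correspondence M X R \<longleftrightarrow> R \<subseteq> M \<times> X \<and> fst ` R = M \<and> snd ` R = X"

definition dis :: "('a \<Rightarrow> 'a \<Rightarrow> real) \<Rightarrow> ('b \<Rightarrow> 'b \<Rightarrow> real) \<Rightarrow> ('a \<times> 'b) set \<Rightarrow> ereal" where
  "dis dM dX R = (SUP p\<in>R. SUP q\<in>R. ereal \<bar>dM (fst p) (fst q) - dX (snd p) (snd q)\<bar>)"

definition dGH :: "'a set \<Rightarrow> ('a \<Rightarrow> 'a \<Rightarrow> real) \<Rightarrow> 'b set \<Rightarrow> ('b \<Rightarrow> 'b \<Rightarrow> real) \<Rightarrow> ereal" where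
  "dGH M dM X dX = (INF R\<in>{R. correspondence M X R}. dis dM dX R) / 2"

definition sM :: "'a set \<Rightarrow> ('a \<Rightarrow> 'a \<Rightarrow> real) \<Rightarrow> real" where
  "sM M dM = Inf {dM x x' | x x'. x \<in> M \<and> x' \<in> M \<and> x \<noteq> x'}"

definition dis_map :: "'a set \<Rightarrow> ('a \<Rightarrow> 'a \<Rightarrow> real) \<Rightarrow> ('a \<Rightarrow> 'a) \<Rightarrow> ereal" where
  "dis_map M dM f = (SUP x\<in>M. SUP x'\<in>M. ereal \<bar>dM x x' - dM (f x) (f x')\<bar>)"

definition eM :: "'a set \<Rightarrow> ('a \<Rightarrow> 'a \<Rightarrow> real) \<Rightarrow> ereal" where
  "eM M dM = (INF f\<in>{f. bij_betw f M M \<and> (\<exists>x\<in>M. f x \<noteq> x)}. dis_map M dM f)"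

definition diam :: "('b \<Rightarrow> 'b \<Rightarrow> real) \<Rightarrow> 'b set \<Rightarrow> ereal" where
  "diam dX A = (SUP x\<in>A. SUP y\<in>A. ereal (dX x y))"

end

theory Submission imports Defs begin

text \<open>If \<open>dis R < 2d \<le> s(M)\<close>, a point \<open>x\<close> of \<open>X\<close> lies in at most one fibre \<open>R(i)\<close>: two
  points of \<open>M\<close> whose fibres contain \<open>x\<close> are within \<open>dis R\<close> of \<open>|xx| = 0\<close>, hence closer
  than \<open>s(M)\<close>. So the fibres partition \<open>X\<close>. If \<open>4d \<le> s(M)\<close>, a fibre of \<open>R\<close> meeting a fibre
  of another correspondence \<open>R'\<close> of distortion \<open>< 2d\<close> coincides with it, so \<open>R\<close> and \<open>R'\<close>
  have the same fibres, matched by a bijection \<open>f\<close> of \<open>M\<close> with \<open>R(i) = R'(f i)\<close>. Comparing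
  \<open>|ii'|\<close> and \<open>|f(i) f(i')|\<close> with \<open>|xx'|\<close> for \<open>x \<in> R(i)\<close>, \<open>x' \<in> R(i')\<close> gives
  \<open>dis f \<le> dis R + dis R' < 4d\<close>; if also \<open>4d \<le> e(M)\<close>, then \<open>f\<close> is the identity and \<open>R = R'\<close>.
  A correspondence that is the only one of distortion \<open>< 2d\<close> attains the infimum defining
  \<open>d\<^sub>G\<^sub>H\<close>.\<close>

lemma dis_ge_pair:
  assumes "(i, x) \<in> R" "(j, y) \<in> R"
  shows "ereal \<bar>dM i j - dX x y\<bar> \<le> dis dM dX R"
proof -
  have "ereal \<bar>dM i j - dX x y\<bar> \<le> (SUP q\<in>R. ereal \<bar>dM (fst (i, x)) (fst q) - dX (snd (i, x)) (snd q)\<bar>)"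
    by (rule SUP_upper2[OF assms(2)]) simp
  also have "\<dots> \<le> dis dM dX R"
    unfolding dis_def by (rule SUP_upper[OF assms(1)])
  finally show ?thesis .
qed

lemma dis_less_imp_pair_less:
  assumes "dis dM dX R < ereal c" "(i, x) \<in> R" "(j, y) \<in> R"
  shows "\<bar>dM i j - dX x y\<bar> < c"
  using order_le_less_trans[OF dis_ge_pair[OF assms(2,3)] assms(1)] by simp

lemma dis_less_obtain_real:
  assumes "dis dM dX R < ereal c" "R \<noteq> {}"
  obtains a where "dis dM dX R = ereal a" "a < c"
proof -
  obtain p where "p \<in> R" using assms(2) by auto
  then have "ereal 0 \<le> dis dM dX R"
    using dis_ge_pair[of "fst p" "snd p" R "fst p" "snd p" dM dX]
    by (metis abs_ge_zero ereal_less_eq(3) order_trans prod.collapse)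
  with assms(1) that show ?thesis by (cases "dis dM dX R") auto
qed

lemma dis_less_imp_pos:
  assumes "dis dM dX R < ereal c" "(i, x) \<in> R"
  shows "0 < c"
  using dis_less_imp_pair_less[OF assms(1,2,2)] by linarith

lemma sM_le_dist:
  assumes "Metric_space M dM" "i \<in> M" "j \<in> M" "i \<noteq> j"
  shows "sM M dM \<le> dM i j"
  unfolding sM_def
proof (rule cInf_lower)
  show "dM i j \<in> {dM x x' |x x'. x \<in> M \<and> x' \<in> M \<and> x \<noteq> x'}" using assms(2-4) by blast
  show "bdd_below {dM x x' |x x'. x \<in> M \<and> x' \<in> M \<and> x \<noteq> x'}"
    using Metric_space.nonneg[OF assms(1)] by (intro bdd_belowI[where m = 0]) auto
qed

lemma dist_less_sM_imp_eq:
  assumes "Metric_space M dM" "i \<in> M" "j \<in> M" "dM i j < sM M dM"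
  shows "i = j"
  using sM_le_dist[OF assms(1-3)] assms(4) by fastforce

lemma correspondence_memD:
  assumes "correspondence M X R" "(i, x) \<in> R"
  shows "i \<in> M" "x \<in> X"
  using assms unfolding correspondence_def by auto

lemma correspondence_fst_ex:
  assumes "correspondence M X R" "i \<in> M"
  shows "\<exists>x. (i, x) \<in> R"
  using assms unfolding correspondence_def by force

lemma correspondence_snd_ex:
  assumes "correspondence M X R" "x \<in> X"
  shows "\<exists>i. (i, x) \<in> R"
  using assms unfolding correspondence_def by force

lemma fiber_dist_le_dis:
  assumes "xi \<in> R `` {i}" "xj \<in> R `` {j}"
  shows "ereal \<bar>dX xi xj - dM i j\<bar> \<le> dis dM dX R"
  using dis_ge_pair[of i xi R j xj dM dX] assms by (simp add: abs_minus_commute)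

lemma fiber_dist_less:
  assumes "dis dM dX R < ereal c" "xi \<in> R `` {i}" "xj \<in> R `` {j}"
  shows "\<bar>dX xi xj - dM i j\<bar> < c"
  using order_le_less_trans[OF fiber_dist_le_dis[OF assms(2,3)] assms(1)] by simp

lemma diam_fiber_le_dis:
  assumes "Metric_space M dM" "Metric_space X dX" "correspondence M X R" "i \<in> M"
  shows "diam dX (R `` {i}) \<le> dis dM dX R"
  unfolding diam_def
proof (intro SUP_least)
  fix x y assume "x \<in> R `` {i}" "y \<in> R `` {i}"
  then have "ereal \<bar>dX x y - dM i i\<bar> \<le> dis dM dX R" by (rule fiber_dist_le_dis)
  moreover have "dM i i = 0" using Metric_space.mdist_zero[OF assms(1,4)] .
  moreover have "0 \<le> dX x y" using Metric_space.nonneg[OF assms(2)] .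
  ultimately show "ereal (dX x y) \<le> dis dM dX R" by simp
qed

lemma fibers_disjoint:
  assumes mM: "Metric_space M dM" and mX: "Metric_space X dX"
    and R: "correspondence M X R" "dis dM dX R < ereal c" and s: "c \<le> sM M dM"
    and "(i, x) \<in> R" "(j, x) \<in> R"
  shows "i = j"
proof -
  have "i \<in> M" "j \<in> M" "x \<in> X" using correspondence_memD[OF R(1)] assms(6,7) by auto
  moreover have "\<bar>dM i j - dX x x\<bar> < c" by (rule dis_less_imp_pair_less[OF R(2) assms(6,7)])
  moreover have "dX x x = 0" using Metric_space.mdist_zero[OF mX \<open>x \<in> X\<close>] .
  ultimately show ?thesis using dist_less_sM_imp_eq[OF mM, of i j] s by simp
qed

lemma fibers_partition:
  assumes "Metric_space M dM" "Metric_space X dX"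
    and "correspondence M X R" "dis dM dX R < ereal c" "c \<le> sM M dM"
  shows "(\<forall>i\<in>M. R `` {i} \<noteq> {})
    \<and> (\<forall>i\<in>M. \<forall>j\<in>M. i \<noteq> j \<longrightarrow> R `` {i} \<inter> R `` {j} = {})
    \<and> (\<Union>i\<in>M. R `` {i}) = X"
proof (intro conjI ballI impI)
  fix i assume "i \<in> M"
  then show "R `` {i} \<noteq> {}" using correspondence_fst_ex[OF assms(3)] by blast
next
  fix i j assume "i \<in> M" "j \<in> M" "i \<noteq> j"
  then show "R `` {i} \<inter> R `` {j} = {}" using fibers_disjoint[OF assms] by blast
next
  show "(\<Union>i\<in>M. R `` {i}) = X"
    using correspondence_snd_ex[OF assms(3)] correspondence_memD[OF assms(3)] by blast
qed

text \<open>For \<open>x \<in> R(i) \<inter> R'(j)\<close> and \<open>y \<in> R(i) \<inter> R'(k)\<close>, comparing with \<open>|ii| = 0\<close> gives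
  \<open>|xy| < 2d\<close>, hence \<open>|jk| < |xy| + 2d < 4d \<le> s(M)\<close> and \<open>k = j\<close>.\<close>

lemma fiber_subset_if_meet:
  assumes mM: "Metric_space M dM"
    and R: "correspondence M X R" "dis dM dX R < ereal (2 * d)"
    and R': "correspondence M X R'" "dis dM dX R' < ereal (2 * d)"
    and s: "4 * d \<le> sM M dM" and ix: "(i, x) \<in> R" and jx: "(j, x) \<in> R'"
  shows "R `` {i} \<subseteq> R' `` {j}"
proof
  fix y assume "y \<in> R `` {i}"
  then have iy: "(i, y) \<in> R" by simp
  obtain k where ky: "(k, y) \<in> R'"
    using correspondence_snd_ex[OF R'(1) correspondence_memD(2)[OF R(1) iy]] ..
  have "i \<in> M" "j \<in> M"
    using correspondence_memD(1)[OF R(1) ix] correspondence_memD(1)[OF R'(1) jx] .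
  have "\<bar>dM i i - dX x y\<bar> < 2 * d" by (rule dis_less_imp_pair_less[OF R(2) ix iy])
  moreover have "\<bar>dM j k - dX x y\<bar> < 2 * d" by (rule dis_less_imp_pair_less[OF R'(2) jx ky(1)])
  moreover have "dM i i = 0" using Metric_space.mdist_zero[OF mM \<open>i \<in> M\<close>] .
  ultimately have "dM j k < sM M dM" using s by linarith
  with mM \<open>j \<in> M\<close> correspondence_memD(1)[OF R'(1) ky] have "j = k" by (rule dist_less_sM_imp_eq)
  then show "y \<in> R' `` {j}" using ky by simp
qed

lemma fiber_eq_if_meet:
  assumes "Metric_space M dM"
    and "correspondence M X R" "dis dM dX R < ereal (2 * d)"
    and "correspondence M X R'" "dis dM dX R' < ereal (2 * d)"
    and "4 * d \<le> sM M dM" "(i, x) \<in> R" "(j, x) \<in> R'"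
  shows "R `` {i} = R' `` {j}"
  using fiber_subset_if_meet[OF assms] fiber_subset_if_meet[OF assms(1,4,5,2,3,6,8,7)] by blast

lemma ex_matching_fiber:
  assumes "Metric_space M dM"
    and R: "correspondence M X R" "dis dM dX R < ereal (2 * d)"
    and R': "correspondence M X R'" "dis dM dX R' < ereal (2 * d)"
    and "4 * d \<le> sM M dM" and "i \<in> M"
  shows "\<exists>j\<in>M. R `` {i} = R' `` {j}"
proof -
  obtain x where ix: "(i, x) \<in> R" using correspondence_fst_ex[OF R(1) \<open>i \<in> M\<close>] ..
  obtain j where jx: "(j, x) \<in> R'"
    using correspondence_snd_ex[OF R'(1) correspondence_memD(2)[OF R(1) ix]] ..
  show ?thesis
    using correspondence_memD(1)[OF R'(1) jx] fiber_eq_if_meet[OF assms(1-6) ix jx] by blast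
qed

lemma fiber_partition_eq:
  assumes "Metric_space M dM"
    and "correspondence M X R" "dis dM dX R < ereal (2 * d)"
    and "correspondence M X R'" "dis dM dX R' < ereal (2 * d)"
    and "4 * d \<le> sM M dM"
  shows "(\<lambda>i. R `` {i}) ` M = (\<lambda>i. R' `` {i}) ` M"
  using ex_matching_fiber[OF assms] ex_matching_fiber[OF assms(1,4,5,2,3,6)] by (auto simp: image_iff)

lemma fiber_matching_bij:
  assumes mM: "Metric_space M dM" and mX: "Metric_space X dX"
    and R: "correspondence M X R" "dis dM dX R < ereal (2 * d)"
    and R': "correspondence M X R'" "dis dM dX R' < ereal (2 * d)"
    and s: "4 * d \<le> sM M dM"
  obtains f where "bij_betw f M M" "\<forall>i\<in>M. R `` {i} = R' `` {f i}"
proof -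
  have s2: "2 * d \<le> sM M dM" if iM: "i \<in> M" for i
  proof -
    obtain x where "(i, x) \<in> R" using correspondence_fst_ex[OF R(1) iM] ..
    with dis_less_imp_pos[OF R(2)] s show ?thesis by fastforce
  qed
  define f where "f i = (SOME j. j \<in> M \<and> R `` {i} = R' `` {j})" for i
  have f: "f i \<in> M \<and> R `` {i} = R' `` {f i}" if "i \<in> M" for i
    unfolding f_def by (rule someI_ex) (use ex_matching_fiber[OF mM R R' s that] in blast)
  have "inj_on f M"
  proof (rule inj_onI)
    fix i i' assume "i \<in> M" "i' \<in> M" "f i = f i'"
    moreover obtain x where "(i, x) \<in> R" using correspondence_fst_ex[OF R(1) \<open>i \<in> M\<close>] ..
    ultimately show "i = i'"
      using f fibers_disjoint[OF mM mX R s2[OF \<open>i \<in> M\<close>]] by (metis Image_singleton_iff)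
  qed
  moreover have "M \<subseteq> f ` M"
  proof
    fix j assume "j \<in> M"
    obtain y where jy: "(j, y) \<in> R'" using correspondence_fst_ex[OF R'(1) \<open>j \<in> M\<close>] ..
    obtain i where iy: "(i, y) \<in> R"
      using correspondence_snd_ex[OF R(1) correspondence_memD(2)[OF R'(1) jy]] ..
    have "i \<in> M" using correspondence_memD(1)[OF R(1) iy] .
    with iy f have "(f i, y) \<in> R'" by blast
    with fibers_disjoint[OF mM mX R' s2[OF \<open>j \<in> M\<close>] _ jy] \<open>i \<in> M\<close>
    show "j \<in> f ` M" by blast
  qed
  ultimately have "bij_betw f M M" using f by (auto simp: bij_betw_def)
  with f that show ?thesis by blast
qed

lemma rel_eq_if_Image_eq:
  assumes "Domain R \<subseteq> A" "Domain R' \<subseteq> A" "\<forall>i\<in>A. R `` {i} = R' `` {i}"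
  shows "R = R'"
proof (intro set_eqI)
  fix p :: "'a \<times> 'b"
  show "p \<in> R \<longleftrightarrow> p \<in> R'"
  proof (cases "fst p \<in> A")
    case True
    then show ?thesis using assms(3) Image_singleton_iff[of "snd p" _ "fst p"] by (metis prod.collapse)
  next
    case False
    then show ?thesis using assms(1,2) by (metis Domain.DomainI prod.collapse subsetD)
  qed
qed

lemma dis_map_fiber_matching_le:
  assumes "correspondence M X R" "dis dM dX R = ereal a"
    and "dis dM dX R' = ereal b" "\<forall>i\<in>M. R `` {i} = R' `` {f i}"
  shows "dis_map M dM f \<le> ereal (a + b)"
  unfolding dis_map_def
proof (intro SUP_least)
  fix i i' assume "i \<in> M" "i' \<in> M"
  obtain x where ix: "(i, x) \<in> R" using correspondence_fst_ex[OF assms(1) \<open>i \<in> M\<close>] ..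
  obtain x' where ix': "(i', x') \<in> R" using correspondence_fst_ex[OF assms(1) \<open>i' \<in> M\<close>] ..
  have "(f i, x) \<in> R'" "(f i', x') \<in> R'"
    using assms(4) \<open>i \<in> M\<close> \<open>i' \<in> M\<close> ix ix' by blast+
  from dis_ge_pair[OF ix ix', of dM dX] dis_ge_pair[OF this, of dM dX] assms(2,3)
  have "\<bar>dM i i' - dX x x'\<bar> \<le> a" "\<bar>dM (f i) (f i') - dX x x'\<bar> \<le> b" by simp_all
  then show "ereal \<bar>dM i i' - dM (f i) (f i')\<bar> \<le> ereal (a + b)" by simp
qed

lemma correspondence_unique:
  assumes mM: "Metric_space M dM" and mX: "Metric_space X dX"
    and R: "correspondence M X R" "dis dM dX R < ereal (2 * d)"
    and R': "correspondence M X R'" "dis dM dX R' < ereal (2 * d)"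
    and s: "4 * d \<le> sM M dM" and e: "ereal (4 * d) \<le> eM M dM"
  shows "R = R'"
proof (cases "M = {}")
  case True
  then show ?thesis using R(1) R'(1) unfolding correspondence_def by auto
next
  case False
  then have "R \<noteq> {}" "R' \<noteq> {}" using R(1) R'(1) unfolding correspondence_def by auto
  obtain a where a: "dis dM dX R = ereal a" "a < 2 * d"
    using dis_less_obtain_real[OF R(2) \<open>R \<noteq> {}\<close>] .
  obtain b where b: "dis dM dX R' = ereal b" "b < 2 * d"
    using dis_less_obtain_real[OF R'(2) \<open>R' \<noteq> {}\<close>] .
  obtain f where f: "bij_betw f M M" "\<forall>i\<in>M. R `` {i} = R' `` {f i}"
    using fiber_matching_bij[OF mM mX R R' s] .
  have "\<forall>i\<in>M. f i = i"
  proof (rule ccontr)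
    assume "\<not> (\<forall>i\<in>M. f i = i)"
    with f(1) have "eM M dM \<le> dis_map M dM f" unfolding eM_def by (intro INF_lower) auto
    with e dis_map_fiber_matching_le[OF R(1) a(1) b(1) f(2)] have "ereal (4 * d) \<le> ereal (a + b)"
      by (meson order_trans)
    with a(2) b(2) show False by simp
  qed
  with f(2) have "\<forall>i\<in>M. R `` {i} = R' `` {i}" by simp
  with R(1) R'(1) show ?thesis unfolding correspondence_def by (intro rel_eq_if_Image_eq) auto
qed

lemma dis_eq_twice_dGH_if_unique:
  assumes R: "correspondence M X R" "dis dM dX R < ereal c"
    and uniq: "\<And>R'. correspondence M X R' \<Longrightarrow> dis dM dX R' < ereal c \<Longrightarrow> R' = R"
  shows "dis dM dX R = 2 * dGH M dM X dX"
proof -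
  have "(INF R'\<in>{R'. correspondence M X R'}. dis dM dX R') = dis dM dX R"
  proof (rule antisym)
    show "(INF R'\<in>{R'. correspondence M X R'}. dis dM dX R') \<le> dis dM dX R"
      by (rule INF_lower) (simp add: R(1))
    show "dis dM dX R \<le> (INF R'\<in>{R'. correspondence M X R'}. dis dM dX R')"
    proof (rule INF_greatest)
      fix R' assume "R' \<in> {R'. correspondence M X R'}"
      then show "dis dM dX R \<le> dis dM dX R'"
        using R(2) uniq[of R'] by (cases "dis dM dX R' < ereal c") auto
    qed
  qed
  moreover have "dis dM dX R \<noteq> \<infinity>" using R(2) by auto
  ultimately show ?thesis unfolding dGH_def by (cases "dis dM dX R") auto
qed

lemma dGH_less_obtain_correspondence:
  assumes "dGH M dM X dX < ereal d"
  obtains R where "correspondence M X R" "dis dM dX R < ereal (2 * d)"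
proof -
  have "(INF R\<in>{R. correspondence M X R}. dis dM dX R) < ereal (2 * d)"
    using assms unfolding dGH_def
    by (cases "INF R\<in>{R. correspondence M X R}. dis dM dX R") auto
  with that show ?thesis by (auto simp: INF_less_iff)
qed

theorem mainTheorem15:
  fixes M :: "'a set" and dM :: "'a \<Rightarrow> 'a \<Rightarrow> real"
    and X :: "'b set" and dX :: "'b \<Rightarrow> 'b \<Rightarrow> real"
    and d :: real
  assumes "Metric_space M dM" and "Metric_space X dX"
    and "infinite M \<or> card M \<ge> 3"
    and "dGH M dM X dX < ereal (sM M dM / 2)"
    and "dGH M dM X dX < ereal d" and "d \<le> sM M dM / 2"
  shows
    "(\<exists>R. correspondence M X R \<and> dis dM dX R < ereal (2 * d) \<and> 2 * d \<le> sM M dM)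
   \<and> (\<forall>R. correspondence M X R \<and> dis dM dX R < ereal (2 * d) \<longrightarrow>
        (\<forall>i\<in>M. R `` {i} \<noteq> {})
      \<and> (\<forall>i\<in>M. \<forall>j\<in>M. i \<noteq> j \<longrightarrow> R `` {i} \<inter> R `` {j} = {})
      \<and> (\<Union>i\<in>M. R `` {i}) = X)
   \<and> (\<forall>R. correspondence M X R \<and> dis dM dX R < ereal (2 * d) \<longrightarrow>
        (\<forall>i\<in>M. \<forall>j\<in>M. \<forall>xi\<in>R `` {i}. \<forall>xj\<in>R `` {j}.
            \<bar>dX xi xj - dM i j\<bar> < 2 * d \<and> 2 * d \<le> sM M dM))
   \<and> (\<forall>R. correspondence M X R \<and> dis dM dX R < ereal (2 * d) \<longrightarrow>
        (\<forall>i\<in>M. diam dX (R `` {i}) < ereal (2 * d) \<and> 2 * d \<le> sM M dM))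
   \<and> (d \<le> sM M dM / 4 \<longrightarrow>
        (\<forall>R R'. correspondence M X R \<and> dis dM dX R < ereal (2 * d)
            \<and> correspondence M X R' \<and> dis dM dX R' < ereal (2 * d) \<longrightarrow>
            (\<lambda>i. R `` {i}) ` M = (\<lambda>i. R' `` {i}) ` M))
   \<and> (d \<le> sM M dM / 4 \<and> ereal d \<le> eM M dM / 4 \<longrightarrow>
        (\<exists>!R. correspondence M X R \<and> dis dM dX R < ereal (2 * d))
      \<and> (\<forall>R. correspondence M X R \<and> dis dM dX R < ereal (2 * d) \<longrightarrow>
            dis dM dX R = 2 * dGH M dM X dX
          \<and> (\<forall>i\<in>M. diam dX (R `` {i}) \<le> dis dM dX R)
          \<and> (\<forall>i\<in>M. \<forall>j\<in>M. i \<noteq> j \<longrightarrow> (\<forall>xi\<in>R `` {i}. \<forall>xj\<in>R `` {j}.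
                ereal \<bar>dX xi xj - dM i j\<bar> \<le> dis dM dX R))))"
proof -
  note mM = assms(1) and mX = assms(2)
  have s2: "2 * d \<le> sM M dM" using assms(6) by linarith
  obtain R0 where R0: "correspondence M X R0" "dis dM dX R0 < ereal (2 * d)"
    using dGH_less_obtain_correspondence[OF assms(5)] .
  have s4: "4 * d \<le> sM M dM" if "d \<le> sM M dM / 4" using that by linarith
  have e4: "ereal (4 * d) \<le> eM M dM" if "ereal d \<le> eM M dM / 4"
    using that by (cases "eM M dM") auto
  have uniq: "R = R0" if "4 * d \<le> sM M dM" "ereal (4 * d) \<le> eM M dM"
    "correspondence M X R" "dis dM dX R < ereal (2 * d)" for R
    using correspondence_unique[OF mM mX that(3,4) R0 that(1,2)] .
  show ?thesis
    apply (intro conjI allI impI ballI; (elim conjE)?)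
    subgoal using R0 s2 by blast
    subgoal premises p using fibers_partition[OF mM mX p(2,3) s2] p(1) by blast
    subgoal using fibers_partition[OF mM mX _ _ s2] by blast
    subgoal using fibers_partition[OF mM mX _ _ s2] by blast
    subgoal by (rule fiber_dist_less)
    subgoal by (rule s2)
    subgoal using diam_fiber_le_dis[OF mM mX] by (rule order.strict_trans1)
    subgoal by (rule s2)
    subgoal using fiber_partition_eq[OF mM] s4 by blast
    subgoal premises p using R0 uniq[OF s4[OF p(1)] e4[OF p(2)]] by blast
    subgoal by (rule dis_eq_twice_dGH_if_unique) (use uniq e4 s4 in auto)
    subgoal by (rule diam_fiber_le_dis[OF mM mX])
    subgoal by (rule fiber_dist_le_dis)
    done
qed

end
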